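(* Let $\sigma\ge 2$, $k\ge 1$, let $U$ be any rotation of a $\sigma$-ary de Bruijn cycle of order $k$, and let $w_{\mathrm{lin}}=U\,U[0..k-2]$, a word of length $\sigma^k+(k-1)$. Then $\operatorname{sre}(w_{\mathrm{lin}})=\sigma^k$.
   Context: A $\sigma$-ary de Bruijn cycle of order $k$ is a cyclic word of length $\sigma^k$ over an alphabet $\Sigma$ of size $\sigma$ in which every word of $\Sigma^k$ occurs exactly once as a cyclic length-$k$ window. Strings are $0$-indexed; $U[0..k-2]$ is empty when $k=1$. For a string $w$, a substring $x$ (possibly empty) is right-maximal if there are distinct $a,b\in\Sigma$ with $xa$ and $xb$ both substrings of $w$; the set of right-extensions is $E_r(w)=\{xa : a\in\Sigma,\ \exists b\ne a \text{ with } xa, xb \text{ substrings of } w\}$. The set of super-maximal extensions is $S_r(w)=\{x\in E_r(w): \text{for all } y\in E_r(w),\ y=zx \Rightarrow z \text{ is empty}\}$, i.e. right-extensions that are not proper suffixes of other right-extensions, and $\operatorname{sre}(w)=|S_r(w)|$. *)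

theory Defs
  imports Main "HOL-Library.Sublist"
begin

definition cwin :: "'a list \<Rightarrow> nat \<Rightarrow> nat \<Rightarrow> 'a list" where
  "cwin V k i = map (\<lambda>j. V ! ((i + j) mod length V)) [0..<k]"

definition de_bruijn :: "'a set \<Rightarrow> nat \<Rightarrow> 'a list \<Rightarrow> bool" where
  "de_bruijn S k V \<longleftrightarrow> length V = card S ^ k \<and> set V \<subseteq> S \<and>
     (\<forall>x. length x = k \<and> set x \<subseteq> S \<longrightarrow> card {i. i < length V \<and> cwin V k i = x} = 1)"

definition right_ext :: "'a set \<Rightarrow> 'a list \<Rightarrow> 'a list set" where
  "right_ext S w = {x @ [a] | x a. a \<in> S \<and>
      (\<exists>b\<in>S. b \<noteq> a \<and> sublist (x @ [a]) w \<and> sublist (x @ [b]) w)}"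

definition super_max_ext :: "'a set \<Rightarrow> 'a list \<Rightarrow> 'a list set" where
  "super_max_ext S w = {x \<in> right_ext S w. \<forall>y \<in> right_ext S w. \<forall>z. y = z @ x \<longrightarrow> z = []}"

definition sre :: "'a set \<Rightarrow> 'a list \<Rightarrow> nat" where
  "sre S w = card (super_max_ext S w)"

end

theory Submission
  imports Defs
begin

text \<open>Unrolling a de Bruijn cycle gives a word \<open>w\<close> of length \<open>\<sigma>\<^sup>k + k - 1\<close> in which every
  word of length \<open>k\<close> occurs. Since \<open>w\<close> has only \<open>\<sigma>\<^sup>k\<close> windows of length \<open>k\<close>, each such word
  occurs at exactly one position, so a word of length at least \<open>k\<close> has at most one right
  extension in \<open>w\<close>. On the other hand every nonempty word of length at most \<open>k\<close> occurs with each
  of its \<open>\<sigma> \<ge> 2\<close> possible last letters. Thus \<open>E\<^sub>r(w)\<close> consists of the nonempty words of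
  length at most \<open>k\<close>, whose suffix-maximal elements are the \<open>\<sigma>\<^sup>k\<close> words of length \<open>k\<close>.\<close>

lemma sublist_iff_take_drop:
  "sublist x w \<longleftrightarrow> (\<exists>i. i + length x \<le> length w \<and> take (length x) (drop i w) = x)"
proof
  assume "sublist x w"
  then obtain ps ss where "w = ps @ x @ ss" by (auto simp: sublist_def)
  then show "\<exists>i. i + length x \<le> length w \<and> take (length x) (drop i w) = x"
    by (intro exI[of _ "length ps"]) auto
next
  assume "\<exists>i. i + length x \<le> length w \<and> take (length x) (drop i w) = x"
  then obtain i where "take (length x) (drop i w) = x" by blast
  then show "sublist x w"
    by (metis sublist_drop sublist_take sublist_order.order.trans)
qed

lemma rotate_rotate_inverse: "rotate (length xs - n mod length xs) (rotate n xs) = xs"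
proof (cases "xs = []")
  case False
  have "(length xs - n mod length xs + n) mod length xs
      = (length xs - n mod length xs + n mod length xs) mod length xs"
    by (simp add: mod_add_right_eq)
  also have "\<dots> = 0" using False by simp
  finally show ?thesis by (simp add: rotate_rotate)
qed simp

lemma cwin_mod: "cwin V k (i mod length V) = cwin V k i"
  by (simp add: cwin_def mod_add_left_eq)

lemma cwin_rotate:
  assumes "V \<noteq> []"
  shows "cwin (rotate r V) k i = cwin V k (r + i)"
  using assms by (simp add: cwin_def nth_rotate mod_add_right_eq add.assoc)

lemma cwin_eq_take_drop:
  assumes "i < length U" and "k \<le> Suc (length U)"
  shows "cwin U k i = take k (drop i (U @ take (k - 1) U))"
proof -
  define W where "W = U @ take (k - 1) U"
  have lenW: "length W = length U + (k - 1)" using assms(2) by (simp add: W_def)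
  have "cwin U k i = take k (drop i W)"
  proof (rule nth_equalityI)
    show "length (cwin U k i) = length (take k (drop i W))"
      using assms lenW by (simp add: cwin_def)
  next
    fix j assume "j < length (cwin U k i)"
    then have j: "j < k" by (simp add: cwin_def)
    then have "take k (drop i W) ! j = W ! (i + j)"
      using assms(1) lenW by (simp add: nth_drop)
    also have "\<dots> = U ! ((i + j) mod length U)"
    proof (cases "i + j < length U")
      case True
      then show ?thesis by (simp add: W_def nth_append)
    next
      case False
      then have "(i + j) mod length U = i + j - length U"
        using assms j by (simp add: le_mod_geq)
      then show ?thesis using False assms j by (simp add: W_def nth_append)
    qed
    finally show "cwin U k i ! j = take k (drop i W) ! j" using j by (simp add: cwin_def)
  qed
  then show ?thesis by (simp add: W_def)
qed

lemma de_bruijn_cwin_surj: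
  assumes "de_bruijn S k V" and "length x = k" and "set x \<subseteq> S"
  shows "\<exists>i < length V. cwin V k i = x"
proof -
  have "card {i. i < length V \<and> cwin V k i = x} = 1"
    using assms unfolding de_bruijn_def by blast
  then show ?thesis
    by (metis (mono_tags, lifting) card.empty empty_Collect_eq zero_neq_one)
qed

lemma less_power_of_card:
  assumes "2 \<le> card S"
  shows "k < card S ^ k"
  using less_exp[of k] power_mono[OF assms, of k] by linarith

definition linear_de_bruijn :: "'a set \<Rightarrow> nat \<Rightarrow> 'a list \<Rightarrow> bool" where
  "linear_de_bruijn S k w \<longleftrightarrow> set w \<subseteq> S \<and> length w = card S ^ k + (k - 1) \<and>
     (\<forall>x. length x = k \<and> set x \<subseteq> S \<longrightarrow> sublist x w)"

lemma linear_de_bruijn_rotate_append_take: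
  fixes r :: nat
  assumes "2 \<le> card S" and "de_bruijn S k V"
  defines "U \<equiv> rotate r V"
  shows "linear_de_bruijn S k (U @ take (k - 1) U)"
proof -
  define N where "N = card S ^ k"
  have lenU: "length U = N" and setU: "set U \<subseteq> S"
    using assms by (simp_all add: de_bruijn_def U_def N_def)
  have kN: "k < N" using less_power_of_card[OF assms(1)] by (simp add: N_def)
  have "sublist x (U @ take (k - 1) U)" if x: "length x = k" "set x \<subseteq> S" for x
  proof -
    define s where "s = N - r mod N"
    obtain i where "cwin V k i = x"
      using de_bruijn_cwin_surj[OF assms(2) x] by blast
    moreover have "V = rotate s U"
      using rotate_rotate_inverse[of V r] lenU by (simp add: s_def U_def)
    moreover have "U \<noteq> []" using lenU kN by auto
    ultimately have "x = cwin U k (s + i)"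
      by (simp add: cwin_rotate)
    also have "\<dots> = cwin U k ((s + i) mod N)"
      using cwin_mod[of U k "s + i"] lenU by simp
    also have "\<dots> = take k (drop ((s + i) mod N) (U @ take (k - 1) U))"
      using lenU kN by (intro cwin_eq_take_drop) auto
    finally show ?thesis
      by (metis sublist_drop sublist_take sublist_order.order.trans)
  qed
  moreover have "length (U @ take (k - 1) U) = N + (k - 1)" using lenU kN by simp
  moreover have "set (U @ take (k - 1) U) \<subseteq> S"
    using setU by (auto dest: in_set_takeD)
  ultimately show ?thesis by (simp add: linear_de_bruijn_def N_def)
qed

lemma linear_de_bruijn_windows_inj:
  assumes "finite S" and "1 \<le> k" and "linear_de_bruijn S k w"
  shows "inj_on (\<lambda>i. take k (drop i w)) {..<card S ^ k}"
proof (rule eq_card_imp_inj_on[OF finite_lessThan])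
  define L where "L = {x. set x \<subseteq> S \<and> length x = k}"
  have len: "length w = card S ^ k + (k - 1)" and "set w \<subseteq> S"
    using assms(3) by (simp_all add: linear_de_bruijn_def)
  then have "(\<lambda>i. take k (drop i w)) ` {..<card S ^ k} \<subseteq> L"
    using assms(2) by (auto simp: L_def dest!: in_set_takeD in_set_dropD)
  moreover have "L \<subseteq> (\<lambda>i. take k (drop i w)) ` {..<card S ^ k}"
  proof
    fix x assume "x \<in> L"
    then have "length x = k" and "sublist x w"
      using assms(3) by (auto simp: L_def linear_de_bruijn_def)
    then obtain i where "i + k \<le> length w" and "take k (drop i w) = x"
      by (auto simp: sublist_iff_take_drop)
    moreover from this have "i < card S ^ k" using len assms(2) by linarith
    ultimately show "x \<in> (\<lambda>i. take k (drop i w)) ` {..<card S ^ k}" by blast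
  qed
  ultimately have "(\<lambda>i. take k (drop i w)) ` {..<card S ^ k} = L" by blast
  then show "card ((\<lambda>i. take k (drop i w)) ` {..<card S ^ k}) = card {..<card S ^ k}"
    using card_lists_length_eq[OF assms(1)] by (simp add: L_def)
qed

lemma linear_de_bruijn_snoc_unique:
  assumes "finite S" and "1 \<le> k" and "linear_de_bruijn S k w" and "k \<le> length x"
    and "sublist (x @ [a]) w" and "sublist (x @ [b]) w"
  shows "a = b"
proof -
  have len: "length w = card S ^ k + (k - 1)"
    using assms(3) by (simp add: linear_de_bruijn_def)
  obtain i where i: "i + Suc (length x) \<le> length w" "take (Suc (length x)) (drop i w) = x @ [a]"
    using assms(5) by (auto simp: sublist_iff_take_drop)
  obtain j where j: "j + Suc (length x) \<le> length w" "take (Suc (length x)) (drop j w) = x @ [b]"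
    using assms(6) by (auto simp: sublist_iff_take_drop)
  have "take k (drop i w) = take k x" and "take k (drop j w) = take k x"
    using arg_cong[OF i(2), of "take k"] arg_cong[OF j(2), of "take k"] assms(4) by simp_all
  moreover have "i < card S ^ k" and "j < card S ^ k"
    using i(1) j(1) len assms(4) by linarith+
  ultimately have "i = j"
    using linear_de_bruijn_windows_inj[OF assms(1-3)] by (simp add: inj_on_def)
  then show "a = b" using i(2) j(2) by simp
qed

lemma linear_de_bruijn_sublist:
  assumes "linear_de_bruijn S k w" and "S \<noteq> {}" and "set y \<subseteq> S" and "length y \<le> k"
  shows "sublist y w"
proof -
  obtain c where "c \<in> S" using assms(2) by blast
  then have "length (y @ replicate (k - length y) c) = k"
    and "set (y @ replicate (k - length y) c) \<subseteq> S"
    using assms(3,4) by auto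
  then have "sublist (y @ replicate (k - length y) c) w"
    using assms(1) by (simp add: linear_de_bruijn_def)
  then show ?thesis
    by (metis sublist_append_rightI sublist_order.order.trans)
qed

lemma right_ext_linear_de_bruijn:
  assumes "finite S" and "2 \<le> card S" and "1 \<le> k" and "linear_de_bruijn S k w"
  shows "right_ext S w = {y. set y \<subseteq> S \<and> y \<noteq> [] \<and> length y \<le> k}"
proof (intro equalityI subsetI)
  fix y assume "y \<in> right_ext S w"
  then obtain x a b where y: "y = x @ [a]" and "b \<noteq> a"
    and sub: "sublist (x @ [a]) w" "sublist (x @ [b]) w"
    by (auto simp: right_ext_def)
  have "set y \<subseteq> set w"
    using y set_mono_sublist[OF sub(1)] by simp
  then have "set y \<subseteq> S"
    using assms(4) by (auto simp: linear_de_bruijn_def)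
  moreover have "\<not> k \<le> length x"
    using linear_de_bruijn_snoc_unique[OF assms(1,3,4) _ sub] \<open>b \<noteq> a\<close> by blast
  ultimately show "y \<in> {y. set y \<subseteq> S \<and> y \<noteq> [] \<and> length y \<le> k}"
    using y by simp
next
  fix y assume y: "y \<in> {y. set y \<subseteq> S \<and> y \<noteq> [] \<and> length y \<le> k}"
  then obtain x a where xa: "y = x @ [a]"
    by (cases y rule: rev_cases) auto
  have "S \<noteq> {}" using assms(2) by auto
  have "a \<in> S" using y xa by simp
  then have "card (S - {a}) \<noteq> 0" using assms(1,2) by simp
  then obtain b where "b \<in> S" "b \<noteq> a" by (metis card.empty DiffE ex_in_conv singletonI)
  have "sublist (x @ [b]) w"
    using y xa \<open>b \<in> S\<close> by (intro linear_de_bruijn_sublist[OF assms(4) \<open>S \<noteq> {}\<close>]) auto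
  moreover have "sublist (x @ [a]) w"
    using y xa by (intro linear_de_bruijn_sublist[OF assms(4) \<open>S \<noteq> {}\<close>]) auto
  ultimately show "y \<in> right_ext S w"
    using xa \<open>a \<in> S\<close> \<open>b \<in> S\<close> \<open>b \<noteq> a\<close> unfolding right_ext_def by blast
qed

lemma super_max_ext_linear_de_bruijn:
  assumes "finite S" and "2 \<le> card S" and "1 \<le> k" and "linear_de_bruijn S k w"
  shows "super_max_ext S w = {x. set x \<subseteq> S \<and> length x = k}"
proof (intro equalityI subsetI)
  fix x assume "x \<in> super_max_ext S w"
  then have x: "x \<in> right_ext S w"
    and maximal: "\<forall>y \<in> right_ext S w. \<forall>z. y = z @ x \<longrightarrow> z = []"
    by (simp_all add: super_max_ext_def)
  from x have "set x \<subseteq> S" and "length x \<le> k"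
    by (simp_all add: right_ext_linear_de_bruijn[OF assms])
  have "S \<noteq> {}" using assms(2) by auto
  then obtain c where "c \<in> S" by blast
  have "length x = k"
  proof (rule ccontr)
    assume "length x \<noteq> k"
    then have "[c] @ x \<in> right_ext S w"
      using \<open>set x \<subseteq> S\<close> \<open>length x \<le> k\<close> \<open>c \<in> S\<close> by (simp add: right_ext_linear_de_bruijn[OF assms])
    then have "[c] = []" using maximal by blast
    then show False by simp
  qed
  then show "x \<in> {x. set x \<subseteq> S \<and> length x = k}"
    using \<open>set x \<subseteq> S\<close> by simp
next
  fix x assume "x \<in> {x. set x \<subseteq> S \<and> length x = k}"
  then have "set x \<subseteq> S" and "length x = k" by simp_all
  then have "x \<in> right_ext S w"
    using assms(3) by (auto simp: right_ext_linear_de_bruijn[OF assms])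
  moreover have "z = []" if "y \<in> right_ext S w" and "y = z @ x" for y z
  proof -
    have "length y \<le> k" using that(1) by (simp add: right_ext_linear_de_bruijn[OF assms])
    then show "z = []" using that(2) \<open>length x = k\<close> by simp
  qed
  ultimately show "x \<in> super_max_ext S w"
    unfolding super_max_ext_def by blast
qed

theorem lemma5:
  fixes S :: "'a set" and \<sigma> k r :: nat and V U :: "'a list"
  assumes "finite S" and "card S = \<sigma>" and "\<sigma> \<ge> 2" and "k \<ge> 1"
    and "de_bruijn S k V" and "U = rotate r V"
  shows "sre S (U @ take (k - 1) U) = \<sigma> ^ k"
proof -
  have card: "2 \<le> card S" using assms(2,3) by simp
  have "linear_de_bruijn S k (U @ take (k - 1) U)"
    unfolding assms(6) by (rule linear_de_bruijn_rotate_append_take[OF card assms(5)])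
  then have "super_max_ext S (U @ take (k - 1) U) = {x. set x \<subseteq> S \<and> length x = k}"
    by (rule super_max_ext_linear_de_bruijn[OF assms(1) card assms(4)])
  then show ?thesis
    using card_lists_length_eq[OF assms(1)] assms(2) by (simp add: sre_def)
qed

end
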